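(* Let $\mathcal{D}$ be an arbitrary distribution on polygonal curves of complexity $m$ whose vertices lie in the unit Euclidean ball $B_2^d$. Let $P=\{\sigma_1,\dots,\sigma_n\}$ be an i.i.d. sample from $\mathcal{D}$ of size $n$. Then the Rademacher and Gaussian complexities for learning the median curve of complexity $m$ under DTW satisfy $\mathcal{R}(P),\mathcal{G}(P)\in\Omega\!\left(\sqrt{m^2/n}\right)$.
   Context: For curves $\sigma=(v_1,\dots,v_{m'})$, $\tau=(w_1,\dots,w_{m''})$, a traversal $T$ is a sequence of index pairs starting with $(1,1)$, ending with $(m',m'')$, each $(i,j)$ followed only by $(i+1,j)$, $(i,j+1)$ or $(i+1,j+1)$; $d_{DTW}(\sigma,\tau)=\min_T\sum_{(i,j)\in T}\|v_i-w_j\|$. Candidate median curves $\psi$ range over curves of complexity $m$ with vertices in $B_2^d$. With independent Rademacher variables $r_i$ and independent standard Gaussians $g_i$, $\mathcal{R}(P)=\mathbb{E}\sup_\psi\left|\frac1n\sum_{i=1}^n d_{DTW}(\sigma_i,\psi)r_i\right|$ and $\mathcal{G}(P)=\mathbb{E}\sup_\psi\left|\frac1n\sum_{i=1}^n d_{DTW}(\sigma_i,\psi)g_i\right|$. *)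

theory Defs
  imports "HOL-Probability.Probability"
begin

text \<open>Points of R^d are represented as functions nat => real; only the
coordinates k < d matter (all others are required to be 0 for ball points).\<close>

type_synonym point = "nat \<Rightarrow> real"
type_synonym curve = "point list"

definition edist :: "nat \<Rightarrow> point \<Rightarrow> point \<Rightarrow> real" where
  "edist d x y = sqrt (\<Sum>k<d. (x k - y k)\<^sup>2)"

definition unit_ball :: "nat \<Rightarrow> point set" where
  "unit_ball d = {x. (\<Sum>k<d. (x k)\<^sup>2) \<le> 1 \<and> (\<forall>k\<ge>d. x k = 0)}"

definition curves :: "nat \<Rightarrow> nat \<Rightarrow> curve set" where
  "curves d m = {c. length c = m \<and> set c \<subseteq> unit_ball d}"

text \<open>Traversals (0-based indices): start (0,0), end (m'-1,m''-1),
each step (i+1,j), (i,j+1) or (i+1,j+1).\<close>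
definition traversal :: "nat \<Rightarrow> nat \<Rightarrow> (nat \<times> nat) list \<Rightarrow> bool" where
  "traversal m1 m2 T \<longleftrightarrow> T \<noteq> [] \<and> hd T = (0, 0) \<and> last T = (m1 - 1, m2 - 1) \<and>
     (\<forall>k. Suc k < length T \<longrightarrow>
        (let (i, j) = T ! k in T ! Suc k \<in> {(Suc i, j), (i, Suc j), (Suc i, Suc j)}))"

definition dtw :: "nat \<Rightarrow> curve \<Rightarrow> curve \<Rightarrow> real" where
  "dtw d \<sigma> \<tau> = Inf {(\<Sum>(i, j)\<leftarrow>T. edist d (\<sigma> ! i) (\<tau> ! j)) | T.
                       traversal (length \<sigma>) (length \<tau>) T}"

text \<open>Empirical Rademacher complexity of the sample sigma_0..sigma_{n-1}
(expectation over uniform signs, computed exactly as a finite average).\<close>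
definition rademacher_complexity :: "nat \<Rightarrow> nat \<Rightarrow> nat \<Rightarrow> (nat \<Rightarrow> curve) \<Rightarrow> real" where
  "rademacher_complexity d m n \<sigma> =
     (\<Sum>r\<in>PiE {..<n} (\<lambda>_. {-1, 1::real}).
        (SUP \<psi>\<in>curves d m. \<bar>(1 / real n) * (\<Sum>i<n. dtw d (\<sigma> i) \<psi> * r i)\<bar>)) / 2 ^ n"

definition std_gaussian :: "real measure" where
  "std_gaussian = density lborel std_normal_density"

definition gaussian_complexity :: "nat \<Rightarrow> nat \<Rightarrow> nat \<Rightarrow> (nat \<Rightarrow> curve) \<Rightarrow> real" where
  "gaussian_complexity d m n \<sigma> =
     integral\<^sup>L (PiM {..<n} (\<lambda>_. std_gaussian))
       (\<lambda>g. SUP \<psi>\<in>curves d m. \<bar>(1 / real n) * (\<Sum>i<n. dtw d (\<sigma> i) \<psi> * g i)\<bar>)"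

end

theory Submission
  imports Defs
begin

text \<open>Let \<open>\<psi>\<^sub>+\<close> and \<open>\<psi>\<^sub>-\<close> be the constant curves at \<open>e\<^sub>1\<close> and \<open>-e\<^sub>1\<close>. A traversal against a
  constant curve visits every vertex of \<open>\<sigma>\<^sub>i\<close>, and every point is at total distance at least 2
  from \<open>e\<^sub>1\<close> and \<open>-e\<^sub>1\<close>, so \<open>b\<^sub>i = DTW(\<sigma>\<^sub>i, \<psi>\<^sub>+) + DTW(\<sigma>\<^sub>i, \<psi>\<^sub>-) \<ge> 2m\<close>.
  By the triangle inequality the supremum over all medians is at least \<open>|\<Sum>\<^sub>i b\<^sub>i g\<^sub>i| / 2n\<close>.
  For Rademacher and Gaussian weights \<open>S = \<Sum>\<^sub>i b\<^sub>i g\<^sub>i\<close> satisfies \<open>E S\<^sup>4 \<le> 3 (E S\<^sup>2)\<^sup>2\<close>, and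
  integrating the minorant \<open>|x| \<ge> 3x\<^sup>2/(2t) - x\<^sup>4/(2t\<^sup>3)\<close> with \<open>t = sqrt (3 E S\<^sup>2)\<close> gives the
  Khintchine-type bound \<open>E |S| \<ge> sqrt (\<Sum>\<^sub>i b\<^sub>i\<^sup>2 / 3) \<ge> 2m sqrt (n/3)\<close>.\<close>

lemma abs_ge_quartic_minorant:
  fixes x t :: real
  assumes "t > 0"
  shows "3 / (2 * t) * x\<^sup>2 - x ^ 4 / (2 * t ^ 3) \<le> \<bar>x\<bar>"
proof -
  define u where "u = \<bar>x\<bar> / t"
  have u: "u \<ge> 0" "\<bar>x\<bar> = u * t" using assms by (auto simp: u_def)
  have x2: "x\<^sup>2 = (u * t)\<^sup>2" using power2_abs[of x] u(2) by simp
  have x4: "x ^ 4 = (u * t) ^ 4"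
    using arg_cong[OF x2, of "\<lambda>y. y\<^sup>2"] by simp
  have "3 * u\<^sup>2 - u ^ 4 \<le> 2 * u"
    using mult_nonneg_nonneg[OF mult_nonneg_nonneg[OF u(1) zero_le_power2[of "u - 1"]], of "u + 2"] u(1)
    by (simp add: power2_eq_square power4_eq_xxxx algebra_simps)
  then have "t * (3 * u\<^sup>2 - u ^ 4) / 2 \<le> t * u"
    using assms by (simp add: mult_left_mono)
  moreover have "3 / (2 * t) * x\<^sup>2 - x ^ 4 / (2 * t ^ 3) = t * (3 * u\<^sup>2 - u ^ 4) / 2"
    using assms unfolding x2 x4 by (simp add: field_simps power2_eq_square power3_eq_cube power4_eq_xxxx)
  ultimately show ?thesis using u(2) by (simp add: mult.commute)
qed

lemma first_abs_moment_lower_bound: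
  fixes M1 M4 B :: real
  assumes minorant: "\<And>t. t > 0 \<Longrightarrow> 3 / (2 * t) * B - M4 / (2 * t ^ 3) \<le> M1"
    and "B \<ge> 0" and "M4 \<le> 3 * B\<^sup>2"
  shows "sqrt (B / 3) \<le> M1"
proof (cases "B = 0")
  case True
  then show ?thesis using minorant[of 1] \<open>M4 \<le> 3 * B\<^sup>2\<close> by simp
next
  case False
  define t where "t = sqrt (3 * B)"
  have t: "t > 0" "t\<^sup>2 = 3 * B" using False \<open>B \<ge> 0\<close> by (auto simp: t_def)
  then have t3: "t ^ 3 = 3 * B * t" by (simp add: power2_eq_square power3_eq_cube)
  have "sqrt (B / 3) = B / t"
    using \<open>B \<ge> 0\<close> unfolding t_def
    by (simp add: real_sqrt_divide real_sqrt_mult real_div_sqrt divide_divide_eq_left[symmetric] mult.commute)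
  also have "\<dots> = 3 / (2 * t) * B - 3 * B\<^sup>2 / (2 * t ^ 3)"
    unfolding t3 using t False by (simp add: field_simps power2_eq_square)
  also have "\<dots> \<le> 3 / (2 * t) * B - M4 / (2 * t ^ 3)"
    using \<open>M4 \<le> 3 * B\<^sup>2\<close> t by (simp add: divide_right_mono)
  also have "\<dots> \<le> M1" by (rule minorant[OF t(1)])
  finally show ?thesis .
qed

lemma sum_mult_fun_upd_last:
  fixes b g :: "nat \<Rightarrow> real"
  shows "(\<Sum>i<Suc n. b i * (g(n := y)) i) = (\<Sum>i<n. b i * g i) + b n * y"
proof -
  have "(\<Sum>i<n. b i * (g(n := y)) i) = (\<Sum>i<n. b i * g i)" by (rule sum.cong) auto
  then show ?thesis by simp
qed

section \<open>Rademacher sums\<close>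

definition rademacher_mean :: "nat \<Rightarrow> ((nat \<Rightarrow> real) \<Rightarrow> real) \<Rightarrow> real" where
  "rademacher_mean n f = (\<Sum>r\<in>PiE {..<n} (\<lambda>_. {-1, 1::real}). f r) / 2 ^ n"

lemma rademacher_mean_Suc:
  "rademacher_mean (Suc n) f = rademacher_mean n (\<lambda>r. (f (r(n := 1)) + f (r(n := -1))) / 2)"
proof -
  let ?R = "PiE {..<n} (\<lambda>_. {-1, 1::real})"
  have inj: "inj_on (\<lambda>(y, r). r(n := y)) ({-1, 1} \<times> ?R)" by (rule inj_combinator) simp
  have "(\<Sum>r\<in>PiE {..<Suc n} (\<lambda>_. {-1, 1::real}). f r) = (\<Sum>(y, r)\<in>{-1, 1} \<times> ?R. f (r(n := y)))"
    unfolding lessThan_Suc PiE_insert_eq by (subst sum.reindex[OF inj]) (simp add: case_prod_beta)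
  also have "\<dots> = (\<Sum>r\<in>?R. f (r(n := 1)) + f (r(n := -1)))"
    by (simp add: sum.cartesian_product[symmetric] sum.distrib add.commute)
  finally show ?thesis by (simp add: rademacher_mean_def sum_divide_distrib)
qed

lemma rademacher_mean_add:
  "rademacher_mean n (\<lambda>r. f r + g r) = rademacher_mean n f + rademacher_mean n g"
  by (simp add: rademacher_mean_def sum.distrib add_divide_distrib)

lemma rademacher_mean_cmult: "rademacher_mean n (\<lambda>r. c * f r) = c * rademacher_mean n f"
  by (simp add: rademacher_mean_def sum_distrib_left)

lemma rademacher_mean_divide: "rademacher_mean n (\<lambda>r. f r / c) = rademacher_mean n f / c"
  by (simp add: rademacher_mean_def sum_divide_distrib mult.commute)

lemma rademacher_mean_const: "rademacher_mean n (\<lambda>_. c) = c"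
  by (simp add: rademacher_mean_def card_PiE)

lemma rademacher_mean_mono: "(\<And>r. f r \<le> g r) \<Longrightarrow> rademacher_mean n f \<le> rademacher_mean n g"
  unfolding rademacher_mean_def by (intro divide_right_mono sum_mono) auto

lemma rademacher_mean_square:
  "rademacher_mean n (\<lambda>r. (\<Sum>i<n. b i * r i)\<^sup>2) = (\<Sum>i<n. (b i)\<^sup>2)"
proof (induction n)
  case 0
  show ?case by (simp add: rademacher_mean_const)
next
  case (Suc n)
  have "rademacher_mean (Suc n) (\<lambda>r. (\<Sum>i<Suc n. b i * r i)\<^sup>2)
      = rademacher_mean n (\<lambda>r. (\<Sum>i<n. b i * r i)\<^sup>2 + (b n)\<^sup>2)"
    unfolding rademacher_mean_Suc sum_mult_fun_upd_last
    by (intro arg_cong[where f="rademacher_mean n"] ext) (simp add: power2_eq_square algebra_simps)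
  then show ?case using Suc by (simp add: rademacher_mean_add rademacher_mean_const)
qed

lemma rademacher_mean_fourth_power_le:
  "rademacher_mean n (\<lambda>r. (\<Sum>i<n. b i * r i) ^ 4) \<le> 3 * (\<Sum>i<n. (b i)\<^sup>2)\<^sup>2"
proof (induction n)
  case 0
  show ?case by (simp add: rademacher_mean_const)
next
  case (Suc n)
  define B where "B = (\<Sum>i<n. (b i)\<^sup>2)"
  have "rademacher_mean (Suc n) (\<lambda>r. (\<Sum>i<Suc n. b i * r i) ^ 4)
      = rademacher_mean n (\<lambda>r. (\<Sum>i<n. b i * r i) ^ 4 + 6 * (b n)\<^sup>2 * (\<Sum>i<n. b i * r i)\<^sup>2 + (b n) ^ 4)"
    unfolding rademacher_mean_Suc sum_mult_fun_upd_last
    by (intro arg_cong[where f="rademacher_mean n"] ext) (simp add: power2_eq_square power4_eq_xxxx algebra_simps)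
  also have "\<dots> \<le> 3 * B\<^sup>2 + 6 * (b n)\<^sup>2 * B + (b n) ^ 4"
    using Suc by (simp add: rademacher_mean_add rademacher_mean_cmult rademacher_mean_const
        rademacher_mean_square B_def)
  also have "\<dots> \<le> 3 * (B + (b n)\<^sup>2)\<^sup>2"
    using zero_le_even_power[of 4 "b n"] by (simp add: power2_eq_square power4_eq_xxxx algebra_simps)
  finally show ?case by (simp add: B_def)
qed

lemma rademacher_mean_abs_ge:
  "sqrt ((\<Sum>i<n. (b i)\<^sup>2) / 3) \<le> rademacher_mean n (\<lambda>r. \<bar>\<Sum>i<n. b i * r i\<bar>)"
proof (rule first_abs_moment_lower_bound)
  fix t :: real assume "t > 0"
  let ?S = "\<lambda>r. \<Sum>i<n. b i * r i"
  have "3 / (2 * t) * (\<Sum>i<n. (b i)\<^sup>2) + (- 1 / (2 * t ^ 3)) * rademacher_mean n (\<lambda>r. ?S r ^ 4)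
      = rademacher_mean n (\<lambda>r. 3 / (2 * t) * (?S r)\<^sup>2 + (- 1 / (2 * t ^ 3)) * ?S r ^ 4)"
    by (simp only: rademacher_mean_add rademacher_mean_cmult rademacher_mean_square)
  also have "\<dots> \<le> rademacher_mean n (\<lambda>r. \<bar>?S r\<bar>)"
    using abs_ge_quartic_minorant[OF \<open>t > 0\<close>] by (intro rademacher_mean_mono) simp
  finally show "3 / (2 * t) * (\<Sum>i<n. (b i)\<^sup>2) - rademacher_mean n (\<lambda>r. ?S r ^ 4) / (2 * t ^ 3)
      \<le> rademacher_mean n (\<lambda>r. \<bar>?S r\<bar>)"
    by simp
qed (simp_all add: sum_nonneg rademacher_mean_fourth_power_le)

section \<open>Gaussian sums\<close>

lemma (in prob_space) has_bochner_integral_const_prob: "has_bochner_integral M (\<lambda>_. c) (c :: real)"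
  by (simp add: has_bochner_integral_iff lebesgue_integral_const prob_space)

lemma nn_integral_eq_ennreal_if_has_bochner_integral:
  assumes "has_bochner_integral M f v" "\<And>x. 0 \<le> f x"
  shows "(\<integral>\<^sup>+ x. ennreal (f x) \<partial>M) = ennreal v"
proof -
  have "v = integral\<^sup>L M f" using assms(1) by (simp add: has_bochner_integral_integral_eq)
  then have "0 \<le> v" by (simp add: assms(2))
  then show ?thesis using assms by (subst nn_integral_eq_integrable) (auto simp: has_bochner_integral_iff)
qed

lemma sets_std_gaussian [measurable_cong, simp]: "sets std_gaussian = sets borel"
  by (simp add: std_gaussian_def)

lemma space_std_gaussian [simp]: "space std_gaussian = UNIV"
  by (simp add: std_gaussian_def)

lemma prob_space_std_gaussian: "prob_space std_gaussian"
  unfolding std_gaussian_def by (rule prob_space_normal_density) simp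

lemma has_bochner_integral_std_gaussian_even_power:
  "has_bochner_integral std_gaussian (\<lambda>y. y ^ (2 * k)) (fact (2 * k) / (2 ^ k * fact k))"
  unfolding std_gaussian_def using std_normal_moment_even[of k]
  by (intro has_bochner_integral_density) auto

lemma has_bochner_integral_std_gaussian_odd_power:
  "has_bochner_integral std_gaussian (\<lambda>y. y ^ (2 * k + 1)) 0"
  unfolding std_gaussian_def using std_normal_moment_odd[of k]
  by (intro has_bochner_integral_density) auto

lemma integrable_std_gaussian_abs: "integrable std_gaussian abs"
  unfolding std_gaussian_def using integrable_std_normal_moment_abs[of 1]
  by (subst integrable_density) auto

lemma has_bochner_integral_std_gaussian_quartic:
  "has_bochner_integral std_gaussian (\<lambda>y. c0 + c1 * y + c2 * y\<^sup>2 + c3 * y ^ 3 + c4 * y ^ 4)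
     (c0 + c2 + 3 * c4)"
proof -
  have "has_bochner_integral std_gaussian (\<lambda>y. c0 * y ^ (2 * 0) + c1 * y ^ (2 * 0 + 1) +
      c2 * y ^ (2 * 1) + c3 * y ^ (2 * 1 + 1) + c4 * y ^ (2 * 2))
      (c0 * (fact (2 * 0) / (2 ^ 0 * fact 0)) + c1 * 0 + c2 * (fact (2 * 1) / (2 ^ 1 * fact 1)) +
       c3 * 0 + c4 * (fact (2 * 2) / (2 ^ 2 * fact 2)))"
    by (intro has_bochner_integral_add has_bochner_integral_mult_right
        has_bochner_integral_std_gaussian_even_power has_bochner_integral_std_gaussian_odd_power)
  then show ?thesis by (simp add: fact_numeral mult.commute)
qed

lemma nn_integral_std_gaussian_shift_square:
  "(\<integral>\<^sup>+ y. ennreal ((s + c * y)\<^sup>2) \<partial>std_gaussian) = ennreal (s\<^sup>2 + c\<^sup>2)"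
proof (rule nn_integral_eq_ennreal_if_has_bochner_integral)
  have "(\<lambda>y. (s + c * y)\<^sup>2) = (\<lambda>y. s\<^sup>2 + (2 * s * c) * y + c\<^sup>2 * y\<^sup>2 + 0 * y ^ 3 + 0 * y ^ 4)"
    by (simp add: power2_eq_square algebra_simps)
  then show "has_bochner_integral std_gaussian (\<lambda>y. (s + c * y)\<^sup>2) (s\<^sup>2 + c\<^sup>2)"
    using has_bochner_integral_std_gaussian_quartic[of "s\<^sup>2" "2 * s * c" "c\<^sup>2" 0 0] by simp
qed simp

lemma nn_integral_std_gaussian_shift_fourth_power:
  "(\<integral>\<^sup>+ y. ennreal ((s + c * y) ^ 4) \<partial>std_gaussian) = ennreal (s ^ 4 + 6 * c\<^sup>2 * s\<^sup>2 + 3 * c ^ 4)"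
proof (rule nn_integral_eq_ennreal_if_has_bochner_integral)
  have "(\<lambda>y. (s + c * y) ^ 4) = (\<lambda>y. s ^ 4 + (4 * s ^ 3 * c) * y + (6 * c\<^sup>2 * s\<^sup>2) * y\<^sup>2 +
      (4 * s * c ^ 3) * y ^ 3 + c ^ 4 * y ^ 4)"
    by (simp add: power2_eq_square power3_eq_cube power4_eq_xxxx algebra_simps)
  then show "has_bochner_integral std_gaussian (\<lambda>y. (s + c * y) ^ 4) (s ^ 4 + 6 * c\<^sup>2 * s\<^sup>2 + 3 * c ^ 4)"
    using has_bochner_integral_std_gaussian_quartic[of "s ^ 4" _ "6 * c\<^sup>2 * s\<^sup>2" _ "c ^ 4"] by simp
qed (simp add: zero_le_even_power)

abbreviation std_gaussian_vector :: "nat \<Rightarrow> (nat \<Rightarrow> real) measure" where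
  "std_gaussian_vector n \<equiv> PiM {..<n} (\<lambda>_. std_gaussian)"

lemma prob_space_std_gaussian_vector: "prob_space (std_gaussian_vector n)"
  by (rule prob_space_PiM) (rule prob_space_std_gaussian)

lemma nn_integral_std_gaussian_vector_Suc:
  assumes [measurable]: "f \<in> borel_measurable (std_gaussian_vector (Suc n))"
  shows "integral\<^sup>N (std_gaussian_vector (Suc n)) f =
    (\<integral>\<^sup>+ x. (\<integral>\<^sup>+ y. f (x(n := y)) \<partial>std_gaussian) \<partial>std_gaussian_vector n)"
proof -
  interpret product_sigma_finite "\<lambda>_::nat. std_gaussian"
    unfolding product_sigma_finite_def
    using prob_space_std_gaussian prob_space_imp_sigma_finite by blast
  show ?thesis using assms unfolding lessThan_Suc by (subst product_nn_integral_insert) auto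
qed

lemma has_bochner_integral_std_gaussian_vector_square:
  "has_bochner_integral (std_gaussian_vector n) (\<lambda>x. (\<Sum>i<n. b i * x i)\<^sup>2) (\<Sum>i<n. (b i)\<^sup>2)"
proof (induction n)
  case 0
  interpret prob_space "std_gaussian_vector 0" by (rule prob_space_std_gaussian_vector)
  show ?case using has_bochner_integral_const_prob[of 0] by simp
next
  case (Suc n)
  interpret prob_space "std_gaussian_vector n" by (rule prob_space_std_gaussian_vector)
  let ?S = "\<lambda>x. \<Sum>i<n. b i * x i"
  have "(\<integral>\<^sup>+ x. ennreal ((\<Sum>i<Suc n. b i * x i)\<^sup>2) \<partial>std_gaussian_vector (Suc n))
      = (\<integral>\<^sup>+ x. ennreal ((?S x)\<^sup>2 + (b n)\<^sup>2) \<partial>std_gaussian_vector n)"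
    by (subst nn_integral_std_gaussian_vector_Suc)
      (auto intro!: nn_integral_cong simp: sum_mult_fun_upd_last nn_integral_std_gaussian_shift_square)
  also have "\<dots> = ennreal ((\<Sum>i<n. (b i)\<^sup>2) + (b n)\<^sup>2)"
    using Suc.IH has_bochner_integral_const_prob
    by (intro nn_integral_eq_ennreal_if_has_bochner_integral has_bochner_integral_add) auto
  finally show ?case
    by (intro has_bochner_integral_nn_integral) (auto simp: sum_nonneg)
qed

lemma has_bochner_integral_std_gaussian_vector_fourth_power:
  "has_bochner_integral (std_gaussian_vector n) (\<lambda>x. (\<Sum>i<n. b i * x i) ^ 4) (3 * (\<Sum>i<n. (b i)\<^sup>2)\<^sup>2)"
proof (induction n)
  case 0
  interpret prob_space "std_gaussian_vector 0" by (rule prob_space_std_gaussian_vector)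
  show ?case using has_bochner_integral_const_prob[of 0] by simp
next
  case (Suc n)
  interpret prob_space "std_gaussian_vector n" by (rule prob_space_std_gaussian_vector)
  let ?S = "\<lambda>x. \<Sum>i<n. b i * x i"
  define B where "B = (\<Sum>i<n. (b i)\<^sup>2)"
  have "(\<integral>\<^sup>+ x. ennreal ((\<Sum>i<Suc n. b i * x i) ^ 4) \<partial>std_gaussian_vector (Suc n))
      = (\<integral>\<^sup>+ x. ennreal (?S x ^ 4 + 6 * (b n)\<^sup>2 * (?S x)\<^sup>2 + 3 * (b n) ^ 4) \<partial>std_gaussian_vector n)"
    by (subst nn_integral_std_gaussian_vector_Suc)
      (auto intro!: nn_integral_cong simp: sum_mult_fun_upd_last nn_integral_std_gaussian_shift_fourth_power)
  also have "\<dots> = ennreal (3 * B\<^sup>2 + 6 * (b n)\<^sup>2 * B + 3 * (b n) ^ 4)"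
    using Suc.IH has_bochner_integral_std_gaussian_vector_square has_bochner_integral_const_prob
    unfolding B_def
    by (intro nn_integral_eq_ennreal_if_has_bochner_integral has_bochner_integral_add
        has_bochner_integral_mult_right) (auto simp: zero_le_even_power)
  also have "3 * B\<^sup>2 + 6 * (b n)\<^sup>2 * B + 3 * (b n) ^ 4 = 3 * (\<Sum>i<Suc n. (b i)\<^sup>2)\<^sup>2"
    by (simp add: B_def power2_eq_square power4_eq_xxxx algebra_simps)
  finally show ?case
    by (intro has_bochner_integral_nn_integral) (auto simp: zero_le_even_power)
qed

lemma integrable_std_gaussian_vector_abs_weighted_sum:
  "integrable (std_gaussian_vector n) (\<lambda>x. \<bar>\<Sum>i<n. b i * x i\<bar>)"
proof (rule Bochner_Integration.integrable_bound)
  interpret prob_space "std_gaussian_vector n" by (rule prob_space_std_gaussian_vector)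
  show "integrable (std_gaussian_vector n) (\<lambda>x. 1 + (\<Sum>i<n. b i * x i)\<^sup>2)"
    using has_bochner_integral_std_gaussian_vector_square
    by (intro Bochner_Integration.integrable_add integrable_const) (auto simp: has_bochner_integral_iff)
  have "\<bar>s\<bar> \<le> 1 + s\<^sup>2" for s :: real
    using zero_le_power2[of "\<bar>s\<bar> - 1"] by (simp add: power2_eq_square algebra_simps abs_mult_self_eq)
  then show "AE x in std_gaussian_vector n. norm \<bar>\<Sum>i<n. b i * x i\<bar> \<le> norm (1 + (\<Sum>i<n. b i * x i)\<^sup>2)"
    by (auto intro!: AE_I2 simp: add_nonneg_nonneg)
qed simp

lemma std_gaussian_vector_abs_weighted_sum_ge:
  "sqrt ((\<Sum>i<n. (b i)\<^sup>2) / 3) \<le> integral\<^sup>L (std_gaussian_vector n) (\<lambda>x. \<bar>\<Sum>i<n. b i * x i\<bar>)"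
proof (rule first_abs_moment_lower_bound)
  fix t :: real assume "t > 0"
  let ?S = "\<lambda>x. \<Sum>i<n. b i * x i"
  have "has_bochner_integral (std_gaussian_vector n) (\<lambda>x. 3 / (2 * t) * (?S x)\<^sup>2 + (- 1 / (2 * t ^ 3)) * ?S x ^ 4)
      (3 / (2 * t) * (\<Sum>i<n. (b i)\<^sup>2) + (- 1 / (2 * t ^ 3)) * (3 * (\<Sum>i<n. (b i)\<^sup>2)\<^sup>2))"
    by (intro has_bochner_integral_add has_bochner_integral_mult_right
        has_bochner_integral_std_gaussian_vector_square has_bochner_integral_std_gaussian_vector_fourth_power)
  moreover have "integral\<^sup>L (std_gaussian_vector n) (\<lambda>x. 3 / (2 * t) * (?S x)\<^sup>2 + (- 1 / (2 * t ^ 3)) * ?S x ^ 4)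
      \<le> integral\<^sup>L (std_gaussian_vector n) (\<lambda>x. \<bar>?S x\<bar>)"
    using calculation abs_ge_quartic_minorant[OF \<open>t > 0\<close>] integrable_std_gaussian_vector_abs_weighted_sum
    by (intro integral_mono) (auto simp: has_bochner_integral_iff)
  ultimately show "3 / (2 * t) * (\<Sum>i<n. (b i)\<^sup>2) - 3 * (\<Sum>i<n. (b i)\<^sup>2)\<^sup>2 / (2 * t ^ 3)
      \<le> integral\<^sup>L (std_gaussian_vector n) (\<lambda>x. \<bar>?S x\<bar>)"
    by (simp add: has_bochner_integral_integral_eq)
qed (simp_all add: sum_nonneg)

lemma integrable_std_gaussian_vector_component_abs:
  assumes "i < n"
  shows "integrable (std_gaussian_vector n) (\<lambda>x. \<bar>x i\<bar>)"
proof -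
  have "distr (std_gaussian_vector n) std_gaussian (\<lambda>x. x i) = std_gaussian"
    using assms prob_space_std_gaussian by (intro distr_PiM_component) auto
  then have "integrable (distr (std_gaussian_vector n) std_gaussian (\<lambda>x. x i)) abs"
    using integrable_std_gaussian_abs by simp
  then show ?thesis
    using assms by (subst (asm) integrable_distr_eq) auto
qed

section \<open>Dynamic time warping\<close>

definition diagonal_traversal :: "nat \<Rightarrow> (nat \<times> nat) list" where
  "diagonal_traversal m = map (\<lambda>k. (k, k)) [0..<m]"

lemma traversal_diagonal_traversal: "m \<ge> 1 \<Longrightarrow> traversal m m (diagonal_traversal m)"
  unfolding traversal_def diagonal_traversal_def by (auto simp: hd_map last_map hd_upt last_upt)

lemma traversal_step:
  assumes "traversal m1 m2 T" "Suc k < length T"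
  shows "fst (T ! k) \<le> fst (T ! Suc k) \<and> fst (T ! Suc k) \<le> Suc (fst (T ! k)) \<and>
    snd (T ! k) \<le> snd (T ! Suc k)"
proof -
  obtain i j where ij: "T ! k = (i, j)" by fastforce
  have "T ! Suc k \<in> {(Suc i, j), (i, Suc j), (Suc i, Suc j)}"
    using assms ij unfolding traversal_def by (metis (no_types, lifting) case_prod_conv)
  then show ?thesis using ij by auto
qed

lemma traversal_mono:
  assumes "traversal m1 m2 T" "k \<le> k'" "k' < length T"
  shows "fst (T ! k) \<le> fst (T ! k') \<and> snd (T ! k) \<le> snd (T ! k')"
  using assms(2,3)
proof (induction k' rule: dec_induct)
  case (step k')
  then show ?case using traversal_step[OF assms(1), of k'] by auto
qed simp

lemma traversal_last_nth:
  assumes "traversal m1 m2 T"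
  shows "T ! (length T - 1) = (m1 - 1, m2 - 1)" and "length T - 1 < length T"
  using assms unfolding traversal_def by (auto simp: last_conv_nth)

lemma traversal_set_le:
  assumes "traversal m1 m2 T" "(i, j) \<in> set T"
  shows "i \<le> m1 - 1 \<and> j \<le> m2 - 1"
proof -
  obtain k where "k < length T" "T ! k = (i, j)" using assms(2) by (metis in_set_conv_nth)
  then show ?thesis
    using traversal_mono[OF assms(1), of k "length T - 1"] traversal_last_nth[OF assms(1)] by simp
qed

lemma traversal_covers_fst:
  assumes "traversal m1 m2 T" "i < m1"
  shows "\<exists>j. (i, j) \<in> set T"
proof -
  define f where "f k = int (fst (T ! k))" for k
  have "T ! 0 = (0, 0)" using assms(1) hd_conv_nth[of T] unfolding traversal_def by auto
  then have "f 0 = 0" by (simp add: f_def)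
  moreover have "f (length T - 1) = int (m1 - 1)"
    using traversal_last_nth(1)[OF assms(1)] by (simp add: f_def)
  moreover have "\<bar>f (k + 1) - f k\<bar> \<le> 1" if "k < length T - 1" for k
  proof -
    have "Suc k < length T" using that by simp
    then show ?thesis using traversal_step[OF assms(1), of k] by (auto simp: f_def)
  qed
  ultimately obtain k where "k \<le> length T - 1" "f k = int i"
    using nat0_intermed_int_val[of "length T - 1" f "int i"] assms(2) by force
  then have "T ! k \<in> set T" "fst (T ! k) = i"
    using traversal_last_nth(2)[OF assms(1)] by (auto simp: f_def)
  then show ?thesis by (metis prod.collapse)
qed

lemma edist_nonneg: "0 \<le> edist d x y"
  by (simp add: edist_def sum_nonneg)

lemma edist_le_2_if_unit_ball:
  assumes "x \<in> unit_ball d" "y \<in> unit_ball d"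
  shows "edist d x y \<le> 2"
proof -
  have "(\<Sum>k<d. (x k - y k)\<^sup>2) \<le> (\<Sum>k<d. 2 * (x k)\<^sup>2 + 2 * (y k)\<^sup>2)"
    by (intro sum_mono) (use zero_le_power2[of "x _ + y _"] in \<open>simp add: power2_eq_square algebra_simps\<close>)
  also have "\<dots> \<le> 2\<^sup>2"
    using assms by (simp add: sum.distrib sum_distrib_left[symmetric] unit_ball_def)
  finally show ?thesis unfolding edist_def using real_sqrt_le_mono by fastforce
qed

lemma abs_coordinate_le_edist:
  assumes "k < d"
  shows "\<bar>x k - y k\<bar> \<le> edist d x y"
proof -
  have "(x k - y k)\<^sup>2 \<le> (\<Sum>k<d. (x k - y k)\<^sup>2)"
    using assms by (intro member_le_sum) auto
  then show ?thesis unfolding edist_def using real_sqrt_le_mono by fastforce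
qed

definition axis_point :: "real \<Rightarrow> point" where
  "axis_point s = (\<lambda>k. if k = 0 then s else 0)"

lemma axis_point_in_unit_ball:
  assumes "d \<ge> 1" "\<bar>s\<bar> \<le> 1"
  shows "axis_point s \<in> unit_ball d"
proof -
  have "(\<lambda>k. (axis_point s k)\<^sup>2) = (\<lambda>k. if k = 0 then s\<^sup>2 else 0)"
    by (auto simp: axis_point_def)
  then have "(\<Sum>k<d. (axis_point s k)\<^sup>2) = s\<^sup>2"
    using assms(1) by (simp only: sum.delta) simp
  also have "\<dots> \<le> 1" using assms(2) by (simp add: abs_le_square_iff[of s 1, simplified])
  finally show ?thesis using assms(1) by (simp add: unit_ball_def axis_point_def)
qed

lemma dtw_le_traversal_cost:
  assumes "traversal (length \<sigma>) (length \<tau>) T"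
  shows "dtw d \<sigma> \<tau> \<le> (\<Sum>(i, j)\<leftarrow>T. edist d (\<sigma> ! i) (\<tau> ! j))"
  unfolding dtw_def using assms
  by (intro cInf_lower bdd_belowI[of _ 0])
    (auto intro!: sum_list_nonneg simp: edist_nonneg split: prod.splits)

lemma dtw_ge:
  assumes "traversal (length \<sigma>) (length \<tau>) T0"
    and "\<And>T. traversal (length \<sigma>) (length \<tau>) T \<Longrightarrow> c \<le> (\<Sum>(i, j)\<leftarrow>T. edist d (\<sigma> ! i) (\<tau> ! j))"
  shows "c \<le> dtw d \<sigma> \<tau>"
  unfolding dtw_def using assms by (intro cInf_greatest) auto

lemma dtw_le_pointwise:
  assumes "length \<sigma> = m" "length \<tau> = m" "m \<ge> 1"
  shows "dtw d \<sigma> \<tau> \<le> (\<Sum>k<m. edist d (\<sigma> ! k) (\<tau> ! k))"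
  using dtw_le_traversal_cost[of \<sigma> \<tau> "diagonal_traversal m" d] traversal_diagonal_traversal[OF assms(3)] assms
  by (simp add: diagonal_traversal_def interv_sum_list_conv_sum_set_nat atLeast0LessThan comp_def)

lemma dtw_nonneg:
  assumes "length \<sigma> = m" "length \<tau> = m" "m \<ge> 1"
  shows "0 \<le> dtw d \<sigma> \<tau>"
  using assms traversal_diagonal_traversal[OF assms(3)]
  by (intro dtw_ge[of _ _ "diagonal_traversal m"])
    (auto intro!: sum_list_nonneg simp: edist_nonneg split: prod.splits)

lemma abs_dtw_le:
  assumes "\<sigma> \<in> curves d m" "\<tau> \<in> curves d m" "m \<ge> 1"
  shows "\<bar>dtw d \<sigma> \<tau>\<bar> \<le> 2 * m"
proof -
  have "dtw d \<sigma> \<tau> \<le> (\<Sum>k<m. edist d (\<sigma> ! k) (\<tau> ! k))"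
    using assms by (intro dtw_le_pointwise) (auto simp: curves_def)
  also have "\<dots> \<le> (\<Sum>k<m. 2)"
    using assms by (intro sum_mono edist_le_2_if_unit_ball) (auto simp: curves_def subset_iff)
  finally show ?thesis
    using dtw_nonneg[of \<sigma> m \<tau> d] assms by (simp add: curves_def)
qed

lemma sum_set_le_sum_list:
  fixes f :: "'a \<Rightarrow> real"
  assumes "\<And>x. 0 \<le> f x"
  shows "sum f (set xs) \<le> (\<Sum>x\<leftarrow>xs. f x)"
proof (induction xs)
  case (Cons x xs)
  have "sum f (set (x # xs)) \<le> f x + sum f (set xs)"
    by (cases "x \<in> set xs") (auto simp: insert_absorb assms)
  then show ?case using Cons by simp
qed simp

text \<open>Every traversal visits every vertex of \<open>\<sigma>\<close>, each at cost at least its distance to \<open>p\<close>.\<close>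
lemma dtw_replicate_ge:
  assumes "length \<sigma> = m" "m \<ge> 1"
  shows "(\<Sum>k<m. edist d (\<sigma> ! k) p) \<le> dtw d \<sigma> (replicate m p)"
proof (rule dtw_ge)
  show "traversal (length \<sigma>) (length (replicate m p)) (diagonal_traversal m)"
    using traversal_diagonal_traversal[OF assms(2)] assms(1) by simp
  fix T assume "traversal (length \<sigma>) (length (replicate m p)) T"
  then have T: "traversal m m T" using assms(1) by simp
  define g where "g i = edist d (\<sigma> ! i) p" for i
  have "(\<Sum>k<m. g k) \<le> sum g (fst ` set T)"
    using traversal_covers_fst[OF T] by (intro sum_mono2) (force simp: g_def edist_nonneg)+
  also have "\<dots> \<le> sum (g \<circ> fst) (set T)"
    by (rule sum_image_le) (auto simp: g_def edist_nonneg)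
  also have "\<dots> \<le> (\<Sum>x\<leftarrow>T. g (fst x))"
    using sum_set_le_sum_list[of "g \<circ> fst" T] by (simp add: g_def edist_nonneg)
  also have "\<dots> = (\<Sum>(i, j)\<leftarrow>T. edist d (\<sigma> ! i) (replicate m p ! j))"
    using traversal_set_le[OF T] assms(2)
    by (intro arg_cong[where f = sum_list] map_cong) (fastforce simp: g_def)+
  finally show "(\<Sum>k<m. edist d (\<sigma> ! k) p) \<le> (\<Sum>(i, j)\<leftarrow>T. edist d (\<sigma> ! i) (replicate m p ! j))"
    by (simp add: g_def)
qed

lemma dtw_axis_pair_ge:
  assumes "length \<sigma> = m" "m \<ge> 1" "d \<ge> 1"
  shows "2 * m \<le> dtw d \<sigma> (replicate m (axis_point 1)) + dtw d \<sigma> (replicate m (axis_point (-1)))"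
proof -
  have pair: "2 \<le> edist d x (axis_point 1) + edist d x (axis_point (-1))" for x
  proof -
    have "2 \<le> \<bar>x 0 - axis_point 1 0\<bar> + \<bar>x 0 - axis_point (-1) 0\<bar>"
      by (simp add: axis_point_def abs_if)
    moreover have "0 < d" using assms(3) by simp
    ultimately show ?thesis using abs_coordinate_le_edist[of 0 d x] by (smt (verit))
  qed
  have "(\<Sum>k<m. 2) \<le> (\<Sum>k<m. edist d (\<sigma> ! k) (axis_point 1)) + (\<Sum>k<m. edist d (\<sigma> ! k) (axis_point (-1)))"
    unfolding sum.distrib[symmetric] by (intro sum_mono pair)
  also have "\<dots> \<le> dtw d \<sigma> (replicate m (axis_point 1)) + dtw d \<sigma> (replicate m (axis_point (-1)))"
    using assms by (intro add_mono dtw_replicate_ge)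
  finally show ?thesis by simp
qed

section \<open>Suprema of weighted means\<close>

locale bounded_weights =
  fixes A :: "'c set" and a :: "nat \<Rightarrow> 'c \<Rightarrow> real" and n :: nat and C :: real
  assumes nonempty: "A \<noteq> {}"
    and bounded: "\<And>i \<psi>. i < n \<Longrightarrow> \<psi> \<in> A \<Longrightarrow> \<bar>a i \<psi>\<bar> \<le> C"
begin

definition sup_abs_mean :: "(nat \<Rightarrow> real) \<Rightarrow> real" where
  "sup_abs_mean g = (SUP \<psi>\<in>A. \<bar>(1 / real n) * (\<Sum>i<n. a i \<psi> * g i)\<bar>)"

lemma abs_mean_le:
  assumes "\<psi> \<in> A"
  shows "\<bar>(1 / real n) * (\<Sum>i<n. a i \<psi> * g i)\<bar> \<le> C / real n * (\<Sum>i<n. \<bar>g i\<bar>)"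
proof -
  have "\<bar>\<Sum>i<n. a i \<psi> * g i\<bar> \<le> (\<Sum>i<n. C * \<bar>g i\<bar>)"
    using bounded[OF _ assms] by (intro sum_abs[THEN order_trans] sum_mono)
      (simp add: abs_mult mult_right_mono)
  then have "\<bar>\<Sum>i<n. a i \<psi> * g i\<bar> / real n \<le> C * (\<Sum>i<n. \<bar>g i\<bar>) / real n"
    by (intro divide_right_mono) (simp_all add: sum_distrib_left)
  then show ?thesis by (simp add: abs_mult)
qed

lemma abs_mean_le_sup_abs_mean:
  "\<psi> \<in> A \<Longrightarrow> \<bar>(1 / real n) * (\<Sum>i<n. a i \<psi> * g i)\<bar> \<le> sup_abs_mean g"
  unfolding sup_abs_mean_def using abs_mean_le by (intro cSUP_upper bdd_aboveI2) auto

lemma sup_abs_mean_nonneg: "0 \<le> sup_abs_mean g"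
proof -
  obtain \<psi> where "\<psi> \<in> A" using nonempty by blast
  then have "\<bar>(1 / real n) * (\<Sum>i<n. a i \<psi> * g i)\<bar> \<le> sup_abs_mean g"
    by (rule abs_mean_le_sup_abs_mean)
  then show ?thesis by (rule order_trans[OF abs_ge_zero])
qed

lemma sup_abs_mean_le: "sup_abs_mean g \<le> C / real n * (\<Sum>i<n. \<bar>g i\<bar>)"
  unfolding sup_abs_mean_def using nonempty abs_mean_le by (intro cSUP_least) auto

lemma sup_abs_mean_lipschitz:
  "\<bar>sup_abs_mean g - sup_abs_mean h\<bar> \<le> C / real n * (\<Sum>i<n. \<bar>g i - h i\<bar>)"
proof -
  have shift: "sup_abs_mean g \<le> sup_abs_mean h + C / real n * (\<Sum>i<n. \<bar>g i - h i\<bar>)" for g h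
    unfolding sup_abs_mean_def[of g]
  proof (intro cSUP_least nonempty)
    fix \<psi> assume "\<psi> \<in> A"
    have "(\<Sum>i<n. a i \<psi> * g i) = (\<Sum>i<n. a i \<psi> * h i) + (\<Sum>i<n. a i \<psi> * (g i - h i))"
      by (simp add: right_diff_distrib sum_subtractf)
    then have "\<bar>(1 / real n) * (\<Sum>i<n. a i \<psi> * g i)\<bar>
        \<le> \<bar>(1 / real n) * (\<Sum>i<n. a i \<psi> * h i)\<bar> + \<bar>(1 / real n) * (\<Sum>i<n. a i \<psi> * (g i - h i))\<bar>"
      by (simp only: distrib_left abs_triangle_ineq)
    then show "\<bar>(1 / real n) * (\<Sum>i<n. a i \<psi> * g i)\<bar> \<le> sup_abs_mean h + C / real n * (\<Sum>i<n. \<bar>g i - h i\<bar>)"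
      using abs_mean_le_sup_abs_mean[OF \<open>\<psi> \<in> A\<close>, of h] abs_mean_le[OF \<open>\<psi> \<in> A\<close>, of "\<lambda>i. g i - h i"]
      by linarith
  qed
  have "(\<Sum>i<n. \<bar>h i - g i\<bar>) = (\<Sum>i<n. \<bar>g i - h i\<bar>)" by (simp add: abs_minus_commute)
  then show ?thesis using shift[of g h] shift[of h g] by (simp add: abs_le_iff)
qed

lemma continuous_on_sup_abs_mean: "continuous_on UNIV sup_abs_mean"
proof (rule continuous_at_imp_continuous_on, intro ballI)
  fix g :: "nat \<Rightarrow> real"
  have "((\<lambda>h. h i) \<longlongrightarrow> g i) (at g)" for i
    using continuous_on_eq_continuous_at[OF open_UNIV, of "\<lambda>h :: nat \<Rightarrow> real. h i"]
    by (simp add: isCont_def)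
  then have "((\<lambda>h. C / real n * (\<Sum>i<n. \<bar>h i - g i\<bar>)) \<longlongrightarrow> C / real n * (\<Sum>i<n. \<bar>g i - g i\<bar>)) (at g)"
    by (intro tendsto_mult tendsto_const tendsto_sum tendsto_rabs tendsto_diff)
  then have lim: "((\<lambda>h. C / real n * (\<Sum>i<n. \<bar>h i - g i\<bar>)) \<longlongrightarrow> 0) (at g)"
    by simp
  have bound: "\<forall>h. norm (sup_abs_mean h - sup_abs_mean g) \<le> C / real n * (\<Sum>i<n. \<bar>h i - g i\<bar>)"
    using sup_abs_mean_lipschitz by simp
  have "((\<lambda>h. sup_abs_mean h - sup_abs_mean g) \<longlongrightarrow> 0) (at g)"
    by (rule Lim_null_comparison[OF always_eventually[OF bound] lim])
  then show "isCont sup_abs_mean g" by (simp add: isCont_def LIM_zero_iff)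
qed

lemma measurable_sup_abs_mean:
  assumes "sets M = sets borel"
  shows "sup_abs_mean \<in> borel_measurable (PiM {..<n} (\<lambda>_. M))"
proof -
  have "(\<lambda>g. g i) \<in> borel_measurable (PiM {..<n} (\<lambda>_. M))" for i
  proof (cases "i < n")
    case True
    then have "(\<lambda>g. g i) \<in> measurable (PiM {..<n} (\<lambda>_. M)) M"
      by (intro measurable_component_singleton) auto
    then show ?thesis by (simp only: measurable_cong_sets[OF refl assms])
  next
    case False
    then have "g i = undefined" if "g \<in> space (PiM {..<n} (\<lambda>_. M))" for g
      using that by (auto simp: space_PiM)
    then show ?thesis by (subst measurable_cong[where g = "\<lambda>_. undefined"]) auto
  qed
  then have "(\<lambda>g. g) \<in> borel_measurable (PiM {..<n} (\<lambda>_. M))"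
    by (rule measurable_coordinatewise_then_product)
  then show ?thesis
    using borel_measurable_continuous_onI[OF continuous_on_sup_abs_mean] by (rule measurable_comp[simplified comp_def])
qed

lemma abs_pair_mean_le_sup_abs_mean:
  assumes "\<psi>1 \<in> A" "\<psi>2 \<in> A"
  shows "\<bar>\<Sum>i<n. (a i \<psi>1 + a i \<psi>2) * g i\<bar> / (2 * real n) \<le> sup_abs_mean g"
proof -
  have "(\<Sum>i<n. (a i \<psi>1 + a i \<psi>2) * g i) = (\<Sum>i<n. a i \<psi>1 * g i) + (\<Sum>i<n. a i \<psi>2 * g i)"
    by (simp add: distrib_right sum.distrib)
  then have "\<bar>\<Sum>i<n. (a i \<psi>1 + a i \<psi>2) * g i\<bar> / real n
      \<le> \<bar>(1 / real n) * (\<Sum>i<n. a i \<psi>1 * g i)\<bar> + \<bar>(1 / real n) * (\<Sum>i<n. a i \<psi>2 * g i)\<bar>"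
    using abs_triangle_ineq[of "\<Sum>i<n. a i \<psi>1 * g i" "\<Sum>i<n. a i \<psi>2 * g i"]
    by (simp add: abs_mult divide_right_mono flip: add_divide_distrib)
  then show ?thesis
    using abs_mean_le_sup_abs_mean[OF assms(1), of g] abs_mean_le_sup_abs_mean[OF assms(2), of g]
    by (simp add: field_simps)
qed

lemma rademacher_mean_sup_abs_mean_ge:
  assumes "\<psi>1 \<in> A" "\<psi>2 \<in> A"
  shows "sqrt ((\<Sum>i<n. (a i \<psi>1 + a i \<psi>2)\<^sup>2) / 3) / (2 * real n) \<le> rademacher_mean n sup_abs_mean"
proof -
  let ?b = "\<lambda>i. a i \<psi>1 + a i \<psi>2"
  have "sqrt ((\<Sum>i<n. (?b i)\<^sup>2) / 3) / (2 * real n) \<le> rademacher_mean n (\<lambda>r. \<bar>\<Sum>i<n. ?b i * r i\<bar>) / (2 * real n)"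
    by (intro divide_right_mono rademacher_mean_abs_ge) simp
  also have "\<dots> = rademacher_mean n (\<lambda>r. \<bar>\<Sum>i<n. ?b i * r i\<bar> / (2 * real n))"
    by (rule rademacher_mean_divide[symmetric])
  also have "\<dots> \<le> rademacher_mean n sup_abs_mean"
    using abs_pair_mean_le_sup_abs_mean[OF assms] by (rule rademacher_mean_mono)
  finally show ?thesis .
qed

lemma integrable_sup_abs_mean: "integrable (std_gaussian_vector n) sup_abs_mean"
proof (rule Bochner_Integration.integrable_bound)
  show "integrable (std_gaussian_vector n) (\<lambda>x. C / real n * (\<Sum>i<n. \<bar>x i\<bar>))"
    using integrable_std_gaussian_vector_component_abs by (intro integrable_mult_right integrable_sum) auto
  show "sup_abs_mean \<in> borel_measurable (std_gaussian_vector n)"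
    by (rule measurable_sup_abs_mean) simp
  show "AE x in std_gaussian_vector n. norm (sup_abs_mean x) \<le> norm (C / real n * (\<Sum>i<n. \<bar>x i\<bar>))"
    using sup_abs_mean_nonneg sup_abs_mean_le by (intro AE_I2) (metis abs_of_nonneg order_trans real_norm_def)
qed

lemma integral_sup_abs_mean_ge:
  assumes "\<psi>1 \<in> A" "\<psi>2 \<in> A"
  shows "sqrt ((\<Sum>i<n. (a i \<psi>1 + a i \<psi>2)\<^sup>2) / 3) / (2 * real n)
    \<le> integral\<^sup>L (std_gaussian_vector n) sup_abs_mean"
proof -
  let ?b = "\<lambda>i. a i \<psi>1 + a i \<psi>2"
  have "sqrt ((\<Sum>i<n. (?b i)\<^sup>2) / 3) / (2 * real n)
      \<le> integral\<^sup>L (std_gaussian_vector n) (\<lambda>x. \<bar>\<Sum>i<n. ?b i * x i\<bar>) / (2 * real n)"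
    by (intro divide_right_mono std_gaussian_vector_abs_weighted_sum_ge) simp
  also have "\<dots> = integral\<^sup>L (std_gaussian_vector n) (\<lambda>x. \<bar>\<Sum>i<n. ?b i * x i\<bar> / (2 * real n))"
    by simp
  also have "\<dots> \<le> integral\<^sup>L (std_gaussian_vector n) sup_abs_mean"
    using integrable_std_gaussian_vector_abs_weighted_sum integrable_sup_abs_mean
      abs_pair_mean_le_sup_abs_mean[OF assms]
    by (intro integral_mono) auto
  finally show ?thesis .
qed

end

lemma half_sqrt_le_sqrt_sum_squares:
  fixes b :: "nat \<Rightarrow> real"
  assumes "n \<ge> 1" "M \<ge> 0" "\<And>i. i < n \<Longrightarrow> 2 * M \<le> b i"
  shows "1 / 2 * sqrt (M\<^sup>2 / real n) \<le> sqrt ((\<Sum>i<n. (b i)\<^sup>2) / 3) / (2 * real n)"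
proof -
  have "(\<Sum>i<n. (2 * M)\<^sup>2) \<le> (\<Sum>i<n. (b i)\<^sup>2)"
    using assms(2,3) by (intro sum_mono power_mono) auto
  then have "4 * (M\<^sup>2 * real n) \<le> (\<Sum>i<n. (b i)\<^sup>2)"
    by (simp add: power_mult_distrib algebra_simps)
  moreover have "0 \<le> M\<^sup>2 * real n" by simp
  ultimately have "M\<^sup>2 * real n \<le> (\<Sum>i<n. (b i)\<^sup>2) / 3" by linarith
  then have "sqrt (M\<^sup>2 * real n) \<le> sqrt ((\<Sum>i<n. (b i)\<^sup>2) / 3)"
    by (rule real_sqrt_le_mono)
  then have "M * sqrt (real n) \<le> sqrt ((\<Sum>i<n. (b i)\<^sup>2) / 3)"
    using assms(2) by (simp add: real_sqrt_mult)
  moreover have "1 / 2 * sqrt (M\<^sup>2 / real n) = M * sqrt (real n) / (2 * real n)"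
    using assms(1,2) by (simp add: real_sqrt_divide field_simps real_div_sqrt)
  ultimately show ?thesis by (simp add: divide_right_mono)
qed

theorem proposition4p2:
  shows "\<exists>c>0. \<forall>d m n (\<sigma> :: nat \<Rightarrow> curve).
           d \<ge> 1 \<longrightarrow> m \<ge> 1 \<longrightarrow> n \<ge> 1 \<longrightarrow> (\<forall>i<n. \<sigma> i \<in> curves d m) \<longrightarrow>
             rademacher_complexity d m n \<sigma> \<ge> c * sqrt (real m ^ 2 / real n) \<and>
             gaussian_complexity d m n \<sigma> \<ge> c * sqrt (real m ^ 2 / real n)"
proof (intro exI[of _ "1 / 2"] conjI allI impI)
  fix d m n and \<sigma> :: "nat \<Rightarrow> curve"
  assume d: "d \<ge> 1" and m: "m \<ge> 1" and n: "n \<ge> 1" and \<sigma>: "\<forall>i<n. \<sigma> i \<in> curves d m"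
  define \<psi>1 \<psi>2 where "\<psi>1 = replicate m (axis_point 1)" and "\<psi>2 = replicate m (axis_point (-1))"
  have \<psi>: "\<psi>1 \<in> curves d m" "\<psi>2 \<in> curves d m"
    using axis_point_in_unit_ball[OF d] by (auto simp: \<psi>1_def \<psi>2_def curves_def)
  interpret bounded_weights "curves d m" "\<lambda>i \<psi>. dtw d (\<sigma> i) \<psi>" n "2 * real m"
    using \<psi> \<sigma> abs_dtw_le m by unfold_locales auto
  have "2 * real m \<le> dtw d (\<sigma> i) \<psi>1 + dtw d (\<sigma> i) \<psi>2" if "i < n" for i
    unfolding \<psi>1_def \<psi>2_def using \<sigma> that d m by (intro dtw_axis_pair_ge) (auto simp: curves_def)
  then have bound: "1 / 2 * sqrt (real m ^ 2 / real n)
      \<le> sqrt ((\<Sum>i<n. (dtw d (\<sigma> i) \<psi>1 + dtw d (\<sigma> i) \<psi>2)\<^sup>2) / 3) / (2 * real n)"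
    using n by (intro half_sqrt_le_sqrt_sum_squares) auto
  have "rademacher_complexity d m n \<sigma> = rademacher_mean n sup_abs_mean"
    unfolding rademacher_complexity_def rademacher_mean_def sup_abs_mean_def ..
  then show "1 / 2 * sqrt (real m ^ 2 / real n) \<le> rademacher_complexity d m n \<sigma>"
    using bound rademacher_mean_sup_abs_mean_ge[OF \<psi>] by linarith
  have "gaussian_complexity d m n \<sigma> = integral\<^sup>L (std_gaussian_vector n) sup_abs_mean"
    unfolding gaussian_complexity_def sup_abs_mean_def ..
  then show "1 / 2 * sqrt (real m ^ 2 / real n) \<le> gaussian_complexity d m n \<sigma>"
    using bound integral_sup_abs_mean_ge[OF \<psi>] by linarith
qed simp

end
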